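(* The dual problem $\min_{(\lambda,X)\in\mathcal C_F}F(\lambda,X)$ admits a unique solution $(\lambda^*,X^* )$. Equivalently, every minimizer $(\lambda,\Gamma,\Theta)$ of $\tilde J$ over $\mathcal C_0$ has the same $\lambda=\lambda^*$ and the same $\chi(\Theta)-\Gamma=X^*$.
   Context: Notation: $\mathbf Q_n$ real symmetric $n\times n$ matrices; $\chi:\mathbf Q_n\to\mathbf Q_n$ the orthogonal projection onto the zero-diagonal symmetric matrices (keeps off-diagonal entries, zeroes the diagonal); $|\cdot|$ the determinant. $\hat\Sigma\in\mathbf Q_n$, $\hat\Sigma\succ0$; $\delta_{max}:=\log|[\hat\Sigma^{-1}-\chi(\hat\Sigma^{-1})]\hat\Sigma|$, and $0<\delta<\delta_{max}$. Define $F(\lambda,X):=-\lambda\big[\log|\hat\Sigma^{-1}+\lambda^{-1}X|+\log|\hat\Sigma|-\delta\big]$, $$\mathcal C_F:=\{(\lambda,X):\ \lambda>0,\ X\in\mathbf Q_n,\ X\preceq I,\ \chi(X)-X\succeq0,\ \hat\Sigma^{-1}+\lambda^{-1}X\succ0\},$$ $$\tilde J(\lambda,\Gamma,\Theta):=\lambda\Big(-\log\big|\hat\Sigma^{-1}+\lambda^{-1}(\chi(\Theta)-\Gamma)\big|-\log|\hat\Sigma|+\delta\Big),$$ $$\mathcal C_0:=\{(\lambda,\Gamma,\Theta)\in\mathbb R\times\mathbf Q_n\times\mathbf Q_n:\ \lambda>0,\ I+\Gamma-\chi(\Theta)\succeq0,\ \Gamma\succeq0,\ \hat\Sigma^{-1}+\lambda^{-1}(\chi(\Theta)-\Gamma)\succ0\}.$$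 *)

theory Defs
  imports "HOL-Analysis.Analysis"
begin

definition symm_mat :: "real^'n^'n \<Rightarrow> bool" where
  "symm_mat A \<longleftrightarrow> transpose A = A"

definition psd :: "real^'n^'n \<Rightarrow> bool" where
  "psd A \<longleftrightarrow> symm_mat A \<and> (\<forall>x. 0 \<le> x \<bullet> (A *v x))"

definition pd :: "real^'n^'n \<Rightarrow> bool" where
  "pd A \<longleftrightarrow> symm_mat A \<and> (\<forall>x. x \<noteq> 0 \<longrightarrow> 0 < x \<bullet> (A *v x))"

text \<open>chi: keep off-diagonal entries, zero the diagonal.\<close>
definition offdiag :: "real^'n^'n \<Rightarrow> real^'n^'n" where
  "offdiag A = (\<chi> i j. if i = j then 0 else A $ i $ j)"

definition delta_max :: "real^'n^'n \<Rightarrow> real" where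
  "delta_max S = ln (det ((matrix_inv S - offdiag (matrix_inv S)) ** S))"

definition Fdual :: "real^'n^'n \<Rightarrow> real \<Rightarrow> real \<Rightarrow> real^'n^'n \<Rightarrow> real" where
  "Fdual S \<delta> lam X = - lam * (ln (det (matrix_inv S + inverse lam *\<^sub>R X)) + ln (det S) - \<delta>)"

definition C_F :: "real^'n^'n \<Rightarrow> (real \<times> (real^'n^'n)) set" where
  "C_F S = {(lam, X). lam > 0 \<and> symm_mat X \<and> psd (mat 1 - X) \<and> psd (offdiag X - X)
              \<and> pd (matrix_inv S + inverse lam *\<^sub>R X)}"

definition Jtilde :: "real^'n^'n \<Rightarrow> real \<Rightarrow> real \<Rightarrow> real^'n^'n \<Rightarrow> real^'n^'n \<Rightarrow> real" where
  "Jtilde S \<delta> lam \<Gamma> \<Theta> = lam * (- ln (det (matrix_inv S + inverse lam *\<^sub>R (offdiag \<Theta> - \<Gamma>)))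
                               - ln (det S) + \<delta>)"

definition C_0 :: "real^'n^'n \<Rightarrow> (real \<times> (real^'n^'n) \<times> (real^'n^'n)) set" where
  "C_0 S = {(lam, \<Gamma>, \<Theta>). lam > 0 \<and> symm_mat \<Gamma> \<and> symm_mat \<Theta>
              \<and> psd (mat 1 + \<Gamma> - offdiag \<Theta>) \<and> psd \<Gamma>
              \<and> pd (matrix_inv S + inverse lam *\<^sub>R (offdiag \<Theta> - \<Gamma>))}"

end

theory Submission
  imports Defs
begin

text \<open>
  \<open>F\<close> is the perspective \<open>\<lambda> g(X/\<lambda>)\<close> of \<open>g(Y) = \<delta> - log|\<Sigma>\<^sup>-\<^sup>1 + Y| - log|\<Sigma>|\<close>, so it is convex
  on the convex set \<open>C\<^sub>F\<close>, and strictly so whenever \<open>P = \<Sigma>\<^sup>-\<^sup>1 + X/\<lambda>\<close> moves, because \<open>log det\<close> is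
  strictly concave on positive definite matrices (simultaneous diagonalisation reduces this to
  the strict concavity of \<open>ln\<close>).

  Existence: since \<open>\<delta> < \<delta>\<^sub>m\<^sub>a\<^sub>x\<close>, some feasible point has \<open>F < 0\<close>. On the sublevel set below that
  value, \<open>P \<preceq> \<Sigma>\<^sup>-\<^sup>1 + I/\<lambda>\<close> gives \<open>F \<ge> \<lambda>\<delta> - \<Sum>\<^sub>k \<lambda> ln(1 + s\<^sub>k/\<lambda>)\<close> with \<open>s\<^sub>k\<close> the eigenvalues of \<open>\<Sigma>\<close>,
  which confines \<open>\<lambda>\<close> to a compact interval away from \<open>0\<close>; the semidefinite constraints then bound
  \<open>X\<close> entrywise, and \<open>F < 0\<close> keeps \<open>det P\<close> away from \<open>0\<close>. So the sublevel set lies in a compact set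
  on which \<open>F\<close> is continuous.

  Uniqueness: two minimizers have the same \<open>P\<close>, since otherwise a convex combination would be
  strictly better; their common negative value \<open>-\<lambda>(log|P| + log|\<Sigma>| - \<delta>)\<close> then forces the same
  \<open>\<lambda>\<close>, hence the same \<open>X\<close>. The objective on \<open>C\<^sub>0\<close> depends only on \<open>(\<lambda>, \<chi>(\<Theta>) - \<Gamma>)\<close>, which maps
  \<open>C\<^sub>0\<close> into \<open>C\<^sub>F\<close>, and every \<open>(\<lambda>, X) \<in> C\<^sub>F\<close> is the image of \<open>(\<lambda>, \<chi>(X) - X, X) \<in> C\<^sub>0\<close>.
\<close>

section \<open>Spectral theorem for real symmetric matrices\<close>

lemma symmetric_matrix_inner_commute:
  fixes A :: "real^'n^'n"
  assumes "transpose A = A"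
  shows "x \<bullet> (A *v y) = (A *v x) \<bullet> y"
  using dot_lmul_matrix[of x A y] vector_transpose_matrix[of x A] assms by simp

lemma quadratic_nonneg_imp_linear_coeff_zero:
  fixes a c :: real
  assumes "\<And>t. 0 \<le> a * t + c * t\<^sup>2"
  shows "a = 0"
proof (rule ccontr)
  assume "a \<noteq> 0"
  define t where "t = - a / (\<bar>c\<bar> + 1)"
  have "a * t + c * t\<^sup>2 \<le> a * t + \<bar>c\<bar> * t\<^sup>2" by (intro add_left_mono mult_right_mono) auto
  also have "\<dots> = - a\<^sup>2 / (\<bar>c\<bar> + 1)\<^sup>2"
    by (simp add: t_def power2_eq_square divide_simps) (simp add: algebra_simps)
  also have "\<dots> < 0" using \<open>a \<noteq> 0\<close> by (simp add: add_pos_nonneg)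
  finally show False using assms[of t] by simp
qed

lemma quadratic_form_add_scaled:
  fixes A :: "real^'n^'n"
  assumes "transpose A = A"
  shows "(x + t *\<^sub>R y) \<bullet> (A *v (x + t *\<^sub>R y))
           = x \<bullet> (A *v x) + 2 * t * (y \<bullet> (A *v x)) + t\<^sup>2 * (y \<bullet> (A *v y))"
proof -
  have "x \<bullet> (A *v y) = y \<bullet> (A *v x)"
    using symmetric_matrix_inner_commute[OF assms, of x y] by (simp add: inner_commute)
  moreover have "(x + t *\<^sub>R y) \<bullet> (A *v (x + t *\<^sub>R y))
      = x \<bullet> (A *v x) + t * (x \<bullet> (A *v y)) + t * (y \<bullet> (A *v x)) + t * t * (y \<bullet> (A *v y))"
    by (simp add: matrix_vector_right_distrib matrix_vector_mult_scaleR inner_add_left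
        inner_add_right distrib_left)
  ultimately show ?thesis by (simp add: power2_eq_square)
qed

lemma maximal_quadratic_form_eigenvector:
  fixes A :: "real^'n^'n"
  assumes sym: "transpose A = A" and W: "subspace W" and xW: "x \<in> W" "A *v x \<in> W"
    and nx: "norm x = 1"
    and max: "\<And>y. y \<in> W \<Longrightarrow> y \<bullet> (A *v y) \<le> (x \<bullet> (A *v x)) * (y \<bullet> y)"
  shows "A *v x = (x \<bullet> (A *v x)) *\<^sub>R x"
proof -
  define c where "c = x \<bullet> (A *v x)"
  define r where "r = A *v x - c *\<^sub>R x"
  have rW: "r \<in> W" unfolding r_def using W xW by (simp add: subspace_diff subspace_scale)
  have xx: "x \<bullet> x = 1" using nx by (simp add: dot_square_norm)
  have xr: "x \<bullet> r = 0" by (simp add: r_def inner_diff_right c_def xx)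
  have rAx: "r \<bullet> (A *v x) = r \<bullet> r"
  proof -
    have "r \<bullet> (A *v x) = r \<bullet> (r + c *\<^sub>R x)" by (simp add: r_def)
    also have "\<dots> = r \<bullet> r" using xr by (simp add: inner_add_right inner_commute[of r x])
    finally show ?thesis .
  qed
  \<comment> \<open>moving \<open>x\<close> along the residual \<open>r\<close> changes the Rayleigh quotient by \<open>2t|r|\<^sup>2 + O(t\<^sup>2)\<close>\<close>
  have "0 \<le> (- 2 * (r \<bullet> r)) * t + (c * (r \<bullet> r) - r \<bullet> (A *v r)) * t\<^sup>2" for t
  proof -
    have "x + t *\<^sub>R r \<in> W" using W xW rW by (simp add: subspace_add subspace_scale)
    from max[OF this] have "c + 2 * t * (r \<bullet> r) + t\<^sup>2 * (r \<bullet> (A *v r))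
        \<le> c * ((x + t *\<^sub>R r) \<bullet> (x + t *\<^sub>R r))"
      unfolding quadratic_form_add_scaled[OF sym] by (simp add: c_def rAx)
    also have "(x + t *\<^sub>R r) \<bullet> (x + t *\<^sub>R r) = 1 + t\<^sup>2 * (r \<bullet> r)"
      using xr by (simp add: inner_add_left inner_add_right xx inner_commute[of r x] power2_eq_square)
    finally show ?thesis by (simp add: algebra_simps)
  qed
  then have "- 2 * (r \<bullet> r) = 0" by (rule quadratic_nonneg_imp_linear_coeff_zero)
  then show ?thesis by (simp add: r_def c_def)
qed

lemma quadratic_form_attains_max_on_subspace:
  fixes A :: "real^'n^'n"
  assumes W: "subspace W" and a: "a \<in> W" "a \<noteq> 0"
  obtains x where "x \<in> W" "norm x = 1" "\<And>y. y \<in> W \<Longrightarrow> y \<bullet> (A *v y) \<le> (x \<bullet> (A *v x)) * (y \<bullet> y)"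
proof -
  define K where "K = W \<inter> sphere 0 1"
  have "compact K" unfolding K_def using W by (simp add: closed_subspace closed_Int_compact)
  moreover have "(1 / norm a) *\<^sub>R a \<in> K" unfolding K_def using a W by (simp add: subspace_scale)
  moreover have "continuous_on K (\<lambda>y. y \<bullet> (A *v y))"
    by (intro continuous_intros linear_continuous_on matrix_vector_mul_linear)
  ultimately obtain x where x: "x \<in> K" and xmax: "\<And>y. y \<in> K \<Longrightarrow> y \<bullet> (A *v y) \<le> x \<bullet> (A *v x)"
    using continuous_attains_sup[of K "\<lambda>y. y \<bullet> (A *v y)"] by blast
  have max: "y \<bullet> (A *v y) \<le> (x \<bullet> (A *v x)) * (y \<bullet> y)" if "y \<in> W" for y
  proof (cases "y = 0")
    case False
    then have "(1 / norm y) *\<^sub>R y \<in> K" using W that by (simp add: K_def subspace_scale)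
    then have "((1 / norm y) *\<^sub>R y) \<bullet> (A *v ((1 / norm y) *\<^sub>R y)) \<le> x \<bullet> (A *v x)"
      by (rule xmax)
    then have "(1 / norm y)\<^sup>2 * (y \<bullet> (A *v y)) \<le> x \<bullet> (A *v x)"
      by (simp add: matrix_vector_mult_scaleR power2_eq_square)
    moreover have "(1 / norm y)\<^sup>2 = 1 / (y \<bullet> y)" by (simp add: dot_square_norm power_one_over)
    ultimately show ?thesis using False by (simp add: divide_le_eq mult.commute)
  qed simp
  have "x \<in> W" "norm x = 1" using x by (simp_all add: K_def)
  from this max show thesis by (rule that)
qed

lemma eigenvector_orthogonal_to_eigenvectors:
  fixes A :: "real^'n^'n"
  assumes sym: "transpose A = A" and B: "finite B" "card B < CARD('n)"
    and eigen: "\<And>b. b \<in> B \<Longrightarrow> \<exists>d. A *v b = d *\<^sub>R b"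
  shows "\<exists>x. norm x = 1 \<and> (\<forall>b\<in>B. b \<bullet> x = 0) \<and> (\<exists>d. A *v x = d *\<^sub>R x)"
proof -
  define W where "W = {y. \<forall>b\<in>B. orthogonal b y}"
  have W: "subspace W" unfolding W_def by (rule subspace_orthogonal_to_vectors)
  have "dim B < DIM(real^'n)" using B dim_le_card[of B B] span_superset[of B] by simp
  then obtain a where "a \<noteq> 0" and "\<And>y. y \<in> span B \<Longrightarrow> orthogonal a y"
    using orthogonal_to_subspace_exists[of B] by blast
  then have "a \<in> W" by (simp add: W_def span_base orthogonal_commute)
  then obtain x where xW: "x \<in> W" and nx: "norm x = 1"
    and xmax: "\<And>y. y \<in> W \<Longrightarrow> y \<bullet> (A *v y) \<le> (x \<bullet> (A *v x)) * (y \<bullet> y)"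
    using quadratic_form_attains_max_on_subspace[OF W _ \<open>a \<noteq> 0\<close>] by blast
  have "b \<bullet> (A *v x) = 0" if "b \<in> B" for b
  proof -
    from eigen[OF that] obtain d where "A *v b = d *\<^sub>R b" by blast
    then show ?thesis
      using symmetric_matrix_inner_commute[OF sym, of b x] xW that by (simp add: W_def orthogonal_def)
  qed
  then have "A *v x \<in> W" by (simp add: W_def orthogonal_def)
  then have "A *v x = (x \<bullet> (A *v x)) *\<^sub>R x"
    by (rule maximal_quadratic_form_eigenvector[OF sym W xW _ nx xmax])
  then show ?thesis using xW nx by (auto simp: W_def orthogonal_def)
qed

lemma orthonormal_eigenvectors:
  fixes A :: "real^'n^'n"
  assumes sym: "transpose A = A" and "k \<le> CARD('n)"
  shows "\<exists>B. finite B \<and> card B = k \<and> pairwise orthogonal B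
           \<and> (\<forall>b\<in>B. norm b = 1 \<and> (\<exists>d. A *v b = d *\<^sub>R b))"
  using assms(2)
proof (induction k)
  case 0
  show ?case by (intro exI[of _ "{}"]) auto
next
  case (Suc k)
  then obtain B where B: "finite B" "card B = k" "pairwise orthogonal B"
      "\<forall>b\<in>B. norm b = 1 \<and> (\<exists>d. A *v b = d *\<^sub>R b)"
    by auto
  have "card B < CARD('n)" using B(2) Suc.prems by simp
  then obtain x where x: "norm x = 1" "\<forall>b\<in>B. b \<bullet> x = 0" "\<exists>d. A *v x = d *\<^sub>R x"
    using eigenvector_orthogonal_to_eigenvectors[OF sym B(1)] B(4) by blast
  have xB: "x \<notin> B"
  proof
    assume "x \<in> B"
    then have "x \<bullet> x = 0" using x(2) by blast
    then show False using x(1) by simp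
  qed
  have orth: "\<forall>b\<in>B. orthogonal x b \<and> orthogonal b x"
    using x(2) by (simp add: orthogonal_def inner_commute)
  show ?case
  proof (intro exI[of _ "insert x B"] conjI)
    show "card (insert x B) = Suc k" using B(1,2) xB by simp
    show "pairwise orthogonal (insert x B)"
      using B(3) orth xB unfolding pairwise_insert by blast
    show "finite (insert x B)" using B(1) by simp
    show "\<forall>b\<in>insert x B. norm b = 1 \<and> (\<exists>d. A *v b = d *\<^sub>R b)"
      using B(4) x(1,3) by blast
  qed
qed

definition diag_mat :: "('n \<Rightarrow> real) \<Rightarrow> real^'n^'n" where
  "diag_mat d = (\<chi> i j. if i = j then d i else 0)"

lemma diag_mat_mult: "diag_mat f ** diag_mat g = diag_mat (\<lambda>k. f k * g k)"
proof -
  have "(\<Sum>k\<in>UNIV. (if i = k then f i else 0) * (if k = j then g k else 0))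
      = (if i = j then f i * g i else 0)" for i j
  proof -
    have "(\<Sum>k\<in>UNIV. (if i = k then f i else 0) * (if k = j then g k else 0))
        = (\<Sum>k\<in>UNIV. if k = i then f i * (if k = j then g k else 0) else 0)"
      by (rule sum.cong) auto
    then show ?thesis by simp
  qed
  then show ?thesis by (simp add: vec_eq_iff matrix_matrix_mult_def diag_mat_def)
qed

lemma transpose_diag_mat [simp]: "transpose (diag_mat f) = diag_mat f"
  by (simp add: vec_eq_iff transpose_def diag_mat_def)

lemma diag_mat_one: "diag_mat (\<lambda>_. 1) = mat 1"
  by (simp add: vec_eq_iff diag_mat_def mat_def)

lemma det_diag_mat: "det (diag_mat f) = prod f UNIV"
  by (subst det_diagonal) (auto simp: diag_mat_def)

lemma diag_mat_vector_mult: "(diag_mat f *v y) $ k = f k * y $ k"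
  by (simp add: matrix_vector_mult_def diag_mat_def if_distrib if_distribR cong: if_cong)

lemma inner_diag_mat: "x \<bullet> (diag_mat f *v x) = (\<Sum>k\<in>UNIV. f k * (x $ k)\<^sup>2)"
  by (simp add: inner_vec_def diag_mat_vector_mult power2_eq_square mult_ac)

theorem symmetric_matrix_diagonalizable:
  fixes A :: "real^'n^'n"
  assumes sym: "transpose A = A"
  obtains Q d where "orthogonal_matrix Q" "A = Q ** diag_mat d ** transpose Q"
proof -
  obtain B where B: "finite B" "card B = CARD('n)" "pairwise orthogonal B"
      "\<forall>b\<in>B. norm b = 1 \<and> (\<exists>d. A *v b = d *\<^sub>R b)"
    using orthonormal_eigenvectors[OF sym, of "CARD('n)"] by auto
  obtain h where h: "bij_betw h (UNIV::'n set) B"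
    using finite_same_card_bij[of "UNIV::'n set" B] B by auto
  have hB: "h i \<in> B" for i using h by (auto simp: bij_betw_def)
  define d where "d i = (SOME d. A *v h i = d *\<^sub>R h i)" for i
  have hd: "A *v h i = d i *\<^sub>R h i" for i
    unfolding d_def by (rule someI_ex) (use B(4) hB in blast)
  have hdot: "h i \<bullet> h j = (if i = j then 1 else 0)" for i j
  proof (cases "i = j")
    case True
    then show ?thesis using B(4) hB[of i] by (simp add: dot_square_norm)
  next
    case False
    then have "h i \<noteq> h j" using h by (auto simp: bij_betw_def inj_on_def)
    then show ?thesis using B(3) hB[of i] hB[of j] False by (simp add: pairwise_def orthogonal_def)
  qed
  define Q :: "real^'n^'n" where "Q = (\<chi> i j. h j $ i)"
  have "transpose Q ** Q = mat 1"
    by (simp add: vec_eq_iff matrix_matrix_mult_def transpose_def Q_def mat_def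
        hdot[symmetric] inner_vec_def)
  then have Q: "orthogonal_matrix Q" by (simp add: orthogonal_matrix)
  have "(A ** Q) $ i $ j = (Q ** diag_mat d) $ i $ j" for i j
  proof -
    have "(A ** Q) $ i $ j = (A *v h j) $ i"
      by (simp add: matrix_matrix_mult_def matrix_vector_mult_def Q_def)
    also have "\<dots> = (Q ** diag_mat d) $ i $ j"
      by (simp add: hd matrix_matrix_mult_def diag_mat_def Q_def if_distrib if_distribR cong: if_cong)
    finally show ?thesis .
  qed
  then have "A ** Q = Q ** diag_mat d" by (simp add: vec_eq_iff)
  moreover have "A = A ** (Q ** transpose Q)"
    using Q by (simp add: orthogonal_matrix_def)
  ultimately have "A = Q ** diag_mat d ** transpose Q"
    by (simp add: matrix_mul_assoc)
  with Q show thesis by (rule that)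
qed

section \<open>Positive definite matrices\<close>

lemma pd_imp_transpose_eq: "pd A \<Longrightarrow> transpose A = A"
  by (simp add: pd_def symm_mat_def)

lemma psd_imp_transpose_eq: "psd A \<Longrightarrow> transpose A = A"
  by (simp add: psd_def symm_mat_def)

lemma pd_imp_psd: "pd A \<Longrightarrow> psd A"
  unfolding pd_def psd_def by (metis inner_zero_left less_eq_real_def)

lemma orthogonal_matrix_imp_invertible: "orthogonal_matrix Q \<Longrightarrow> invertible Q"
  by (auto simp: invertible_def orthogonal_matrix_def)

lemma congruence_diag_mat_entry:
  "(M ** diag_mat f ** transpose M) $ i $ j = (\<Sum>k\<in>UNIV. M $ i $ k * f k * M $ j $ k)"
  by (simp add: matrix_matrix_mult_def diag_mat_def transpose_def if_distrib if_distribR cong: if_cong)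

lemma congruence_diag_mat_combination:
  "a *\<^sub>R (M ** diag_mat f ** transpose M) + b *\<^sub>R (M ** diag_mat g ** transpose M)
     = M ** diag_mat (\<lambda>k. a * f k + b * g k) ** transpose M"
  by (simp add: vec_eq_iff congruence_diag_mat_entry sum_distrib_left sum.distrib[symmetric]
      algebra_simps)

lemma det_congruence_diag_mat: "det (M ** diag_mat f ** transpose M) = (det M)\<^sup>2 * prod f UNIV"
  by (simp add: det_mul det_diag_mat power2_eq_square)

lemma quadratic_form_congruence_diag_mat:
  fixes M :: "real^'n^'n"
  assumes "invertible M"
  obtains x where "x \<noteq> 0" "x \<bullet> ((M ** diag_mat f ** transpose M) *v x) = f k"
proof -
  obtain N where N: "transpose M ** N = mat 1"
    using transpose_invertible[OF assms] by (auto simp: invertible_def)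
  define x where "x = N *v axis k 1"
  have Mx: "transpose M *v x = axis k 1" using N by (simp add: x_def matrix_vector_mul_assoc)
  then have "x \<noteq> 0" by auto
  have "x \<bullet> ((M ** diag_mat f ** transpose M) *v x) = x \<bullet> (M *v (diag_mat f *v (transpose M *v x)))"
    by (simp only: matrix_vector_mul_assoc matrix_mul_assoc)
  also have "\<dots> = (transpose M *v x) \<bullet> (diag_mat f *v (transpose M *v x))"
    using dot_lmul_matrix[of x M] vector_transpose_matrix[of x "transpose M"] by simp
  also have "\<dots> = f k"
    unfolding Mx by (simp add: inner_diag_mat axis_def power2_eq_square if_distrib if_distribR cong: if_cong)
  finally show thesis using \<open>x \<noteq> 0\<close> that by blast
qed

lemma pd_congruence_diag_mat_pos:
  fixes M :: "real^'n^'n"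
  assumes "invertible M" "pd (M ** diag_mat f ** transpose M)"
  shows "0 < f k"
  using quadratic_form_congruence_diag_mat[OF assms(1), of f k] assms(2) by (metis pd_def)

lemma psd_congruence_diag_mat_nonneg:
  fixes M :: "real^'n^'n"
  assumes "invertible M" "psd (M ** diag_mat f ** transpose M)"
  shows "0 \<le> f k"
  using quadratic_form_congruence_diag_mat[OF assms(1), of f k] assms(2) by (metis psd_def)

lemma pd_factorization:
  fixes A :: "real^'n^'n"
  assumes pd: "pd A"
  obtains L :: "real^'n^'n" where "invertible L" "A = L ** transpose L"
proof -
  obtain Q d where Q: "orthogonal_matrix Q" and A: "A = Q ** diag_mat d ** transpose Q"
    using symmetric_matrix_diagonalizable[OF pd_imp_transpose_eq[OF pd]] by blast
  have d: "0 < d k" for k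
    using pd_congruence_diag_mat_pos[OF orthogonal_matrix_imp_invertible[OF Q]] pd A by blast
  define D where "D = diag_mat (\<lambda>k. sqrt (d k))"
  have "invertible D"
    unfolding invertible_def D_def using d
    by (intro exI[of _ "diag_mat (\<lambda>k. 1 / sqrt (d k))"]) (simp add: diag_mat_mult diag_mat_one less_imp_neq[symmetric])
  then have "invertible (Q ** D)" by (rule invertible_mult[OF orthogonal_matrix_imp_invertible[OF Q]])
  moreover have "A = (Q ** D) ** transpose (Q ** D)"
  proof -
    have "D ** transpose D = diag_mat d"
      using d by (simp add: D_def diag_mat_mult less_imp_le)
    moreover have "(Q ** D) ** transpose (Q ** D) = Q ** (D ** transpose D) ** transpose Q"
      by (simp add: matrix_transpose_mul matrix_mul_assoc)
    ultimately show ?thesis by (simp add: A)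
  qed
  ultimately show thesis by (rule that)
qed

theorem simultaneous_diagonalization:
  fixes A B :: "real^'n^'n"
  assumes pd: "pd A" and sym: "transpose B = B"
  obtains M :: "real^'n^'n" and e where "invertible M" "A = M ** transpose M" "B = M ** diag_mat e ** transpose M"
proof -
  obtain L :: "real^'n^'n" where L: "invertible L" and A: "A = L ** transpose L"
    using pd_factorization[OF pd] by blast
  obtain Li :: "real^'n^'n" where LLi: "L ** Li = mat 1" using L by (auto simp: invertible_def)
  have LitLt: "transpose Li ** transpose L = mat 1"
    using LLi by (metis matrix_transpose_mul transpose_mat)
  define C where "C = Li ** B ** transpose Li"
  have "transpose C = C" by (simp add: C_def matrix_transpose_mul sym matrix_mul_assoc)
  then obtain R e where R: "orthogonal_matrix R" and C: "C = R ** diag_mat e ** transpose R"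
    by (rule symmetric_matrix_diagonalizable)
  define M where "M = L ** R"
  show thesis
  proof
    show "invertible M"
      unfolding M_def by (rule invertible_mult[OF L orthogonal_matrix_imp_invertible[OF R]])
    have "M ** transpose M = L ** (R ** transpose R) ** transpose L"
      by (simp add: M_def matrix_transpose_mul matrix_mul_assoc)
    then show "A = M ** transpose M" using R by (simp add: A orthogonal_matrix_def)
    have "M ** diag_mat e ** transpose M = L ** C ** transpose L"
      by (simp add: M_def C matrix_transpose_mul matrix_mul_assoc)
    also have "\<dots> = (L ** Li) ** B ** (transpose Li ** transpose L)"
      by (simp add: C_def matrix_mul_assoc)
    finally show "B = M ** diag_mat e ** transpose M" by (simp add: LLi LitLt)
  qed
qed

lemma pd_det_pos:
  fixes A :: "real^'n^'n"
  assumes "pd A"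
  shows "0 < det A"
proof -
  obtain L :: "real^'n^'n" where "invertible L" "A = L ** transpose L"
    using pd_factorization[OF assms] by blast
  then have "det A = (det L)\<^sup>2" "det L \<noteq> 0"
    by (simp_all add: det_mul invertible_det_nz power2_eq_square)
  then show ?thesis by simp
qed

lemma psd_quadratic_form_eq_0_imp:
  fixes P :: "real^'n^'n"
  assumes psd: "psd P" and x: "x \<bullet> (P *v x) = 0"
  shows "P *v x = 0"
proof -
  define y where "y = P *v x"
  have "0 \<le> (2 * (y \<bullet> y)) * t + (y \<bullet> (P *v y)) * t\<^sup>2" for t
  proof -
    have "0 \<le> (x + t *\<^sub>R y) \<bullet> (P *v (x + t *\<^sub>R y))" using psd by (simp add: psd_def)
    then show ?thesis
      unfolding quadratic_form_add_scaled[OF psd_imp_transpose_eq[OF psd]] by (simp add: x y_def algebra_simps)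
  qed
  then have "2 * (y \<bullet> y) = 0" by (rule quadratic_nonneg_imp_linear_coeff_zero)
  then show ?thesis by (simp add: y_def)
qed

lemma psd_det_nonzero_imp_pd:
  fixes P :: "real^'n^'n"
  assumes psd: "psd P" and det: "det P \<noteq> 0"
  shows "pd P"
proof -
  have inj: "inj ((*v) P)" using det by (simp add: invertible_det_nz[symmetric] inj_matrix_vector_mult)
  have "0 < x \<bullet> (P *v x)" if "x \<noteq> 0" for x
  proof -
    have "P *v x \<noteq> P *v 0" using inj that by (metis injD)
    then have "x \<bullet> (P *v x) \<noteq> 0" using psd_quadratic_form_eq_0_imp[OF psd] by auto
    then show ?thesis using psd by (simp add: psd_def order_less_le)
  qed
  then show ?thesis using psd by (simp add: pd_def psd_def)
qed

lemma symm_mat_combination: "symm_mat A \<Longrightarrow> symm_mat B \<Longrightarrow> symm_mat (s *\<^sub>R A + r *\<^sub>R B)"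
  by (simp add: symm_mat_def transpose_def vec_eq_iff)

lemma quadratic_form_combination:
  "x \<bullet> ((s *\<^sub>R A + r *\<^sub>R B) *v x) = s * (x \<bullet> (A *v x)) + r * (x \<bullet> (B *v x))"
  for A B :: "real^'n^'n"
  by (simp add: matrix_vector_mult_add_rdistrib scaleR_matrix_vector_assoc[symmetric] inner_add_right)

lemma psd_combination:
  fixes A B :: "real^'n^'n"
  assumes "psd A" "psd B" "0 \<le> s" "0 \<le> r"
  shows "psd (s *\<^sub>R A + r *\<^sub>R B)"
  using assms by (simp add: psd_def symm_mat_combination quadratic_form_combination)

lemma pd_convex_combination:
  fixes A B :: "real^'n^'n"
  assumes "pd A" "pd B" "0 < t" "t < 1"
  shows "pd (t *\<^sub>R A + (1 - t) *\<^sub>R B)"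
  using assms by (simp add: pd_def symm_mat_combination quadratic_form_combination add_pos_pos)

lemma ln_weighted_mean_less:
  fixes a b t :: real
  assumes "0 < a" "0 < b" "a \<noteq> b" "0 < t" "t < 1"
  shows "t * ln a + (1 - t) * ln b < ln (t * a + (1 - t) * b)"
proof -
  define m where "m = t * a + (1 - t) * b"
  have m: "0 < m" using assms by (simp add: m_def add_pos_pos)
  have "m - a = (1 - t) * (b - a)" by (simp add: m_def algebra_simps)
  then have "a \<noteq> m" using assms by auto
  then have "t * (ln a - ln m) < t * ((a - m) / m)"
    using assms m by (intro mult_strict_left_mono ln_diff_less) auto
  moreover have "(1 - t) * (ln b - ln m) \<le> (1 - t) * ((b - m) / m)"
    using assms m by (intro mult_left_mono ln_diff_le) auto
  moreover have "t * ((a - m) / m) + (1 - t) * ((b - m) / m) = 0"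
    using m by (simp add: m_def field_simps)
  ultimately show ?thesis by (simp add: m_def algebra_simps)
qed

theorem ln_det_strictly_concave:
  fixes A B :: "real^'n^'n"
  assumes A: "pd A" and B: "pd B" and "A \<noteq> B" and t: "0 < t" "t < 1"
  shows "t * ln (det A) + (1 - t) * ln (det B) < ln (det (t *\<^sub>R A + (1 - t) *\<^sub>R B))"
proof -
  obtain M :: "real^'n^'n" and e where M: "invertible M" and MA: "A = M ** transpose M"
      and MB: "B = M ** diag_mat e ** transpose M"
    using simultaneous_diagonalization[OF A pd_imp_transpose_eq[OF B]] by blast
  have MA': "A = M ** diag_mat (\<lambda>_. 1) ** transpose M" by (simp add: MA diag_mat_one)
  have e: "0 < e k" for k using pd_congruence_diag_mat_pos[OF M] B MB by blast
  define D where "D = (det M)\<^sup>2"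
  have D: "0 < D" using M by (simp add: D_def invertible_det_nz)
  have pos: "0 < t + (1 - t) * e k" for k using t e[of k] by (simp add: add_pos_nonneg)
  have "t *\<^sub>R A + (1 - t) *\<^sub>R B = M ** diag_mat (\<lambda>k. t * 1 + (1 - t) * e k) ** transpose M"
    unfolding MA' MB by (rule congruence_diag_mat_combination)
  then have lnC: "ln (det (t *\<^sub>R A + (1 - t) *\<^sub>R B)) = ln D + (\<Sum>k\<in>UNIV. ln (t + (1 - t) * e k))"
    using D pos by (simp add: det_congruence_diag_mat D_def ln_mult ln_prod prod_pos
        less_imp_neq[symmetric])
  have lnB: "ln (det B) = ln D + (\<Sum>k\<in>UNIV. ln (e k))"
    using D e by (simp add: MB det_congruence_diag_mat D_def ln_mult ln_prod prod_pos
        less_imp_neq[symmetric])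
  have lnA: "ln (det A) = ln D" by (simp add: MA' det_congruence_diag_mat D_def)
  have le: "(1 - t) * ln (e k) \<le> ln (t + (1 - t) * e k)" for k
    using ln_weighted_mean_less[of 1 "e k" t] e[of k] t by (cases "e k = 1") auto
  have "e \<noteq> (\<lambda>_. 1)" using \<open>A \<noteq> B\<close> MA' MB by auto
  then obtain k where "e k \<noteq> 1" by auto
  then have "(1 - t) * ln (e k) < ln (t + (1 - t) * e k)"
    using ln_weighted_mean_less[of 1 "e k" t] e[of k] t by auto
  then have "(\<Sum>k\<in>UNIV. (1 - t) * ln (e k)) < (\<Sum>k\<in>UNIV. ln (t + (1 - t) * e k))"
    using le by (intro sum_strict_mono_ex1) auto
  then show ?thesis unfolding lnA lnB lnC by (simp add: sum_distrib_left algebra_simps)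
qed

lemma det_mono_psd:
  fixes A B :: "real^'n^'n"
  assumes A: "pd A" and B: "transpose B = B" and psd: "psd (B - A)"
  shows "det A \<le> det B"
proof -
  obtain M :: "real^'n^'n" and e where M: "invertible M" and MA: "A = M ** diag_mat (\<lambda>_. 1) ** transpose M"
      and MB: "B = M ** diag_mat e ** transpose M"
    using simultaneous_diagonalization[OF A B] by (metis diag_mat_one matrix_mul_rid)
  have "B - A = 1 *\<^sub>R (M ** diag_mat e ** transpose M) + (- 1) *\<^sub>R (M ** diag_mat (\<lambda>_. 1) ** transpose M)"
    by (simp add: MA MB)
  also have "\<dots> = M ** diag_mat (\<lambda>k. 1 * e k + (- 1) * 1) ** transpose M"
    by (rule congruence_diag_mat_combination)
  finally have "B - A = M ** diag_mat (\<lambda>k. e k - 1) ** transpose M" by simp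
  then have "0 \<le> e k - 1" for k
    using psd_congruence_diag_mat_nonneg[OF M, of "\<lambda>k. e k - 1" k] psd by simp
  then have "1 \<le> prod e UNIV" by (intro prod_ge_1) (simp add: algebra_simps)
  then have "(det M)\<^sup>2 * 1 \<le> (det M)\<^sup>2 * prod e UNIV" by (intro mult_left_mono) auto
  then show ?thesis by (simp add: MA MB det_congruence_diag_mat det_diag_mat)
qed

lemma matrix_add_rdistrib: "(A + B) ** C = A ** C + B ** C"
  for A B :: "'a::semiring_1^'n^'m"
  by (simp add: matrix_matrix_mult_def vec_eq_iff sum.distrib distrib_right)

lemma matrix_inv_mult:
  fixes A :: "real^'n^'n"
  assumes "invertible A"
  shows "A ** matrix_inv A = mat 1" "matrix_inv A ** A = mat 1"
proof -
  have "A ** matrix_inv A = mat 1 \<and> matrix_inv A ** A = mat 1"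
    unfolding matrix_inv_def by (rule someI_ex) (use assms in \<open>simp add: invertible_def\<close>)
  then show "A ** matrix_inv A = mat 1" "matrix_inv A ** A = mat 1" by auto
qed

lemma pd_matrix_inv:
  fixes S :: "real^'n^'n"
  assumes pd: "pd S"
  shows "pd (matrix_inv S)"
proof -
  let ?Si = "matrix_inv S"
  have "invertible S" using pd_det_pos[OF pd] by (simp add: invertible_det_nz)
  note inv = matrix_inv_mult[OF this]
  have "transpose ?Si ** S = mat 1"
    using inv(1) pd_imp_transpose_eq[OF pd] by (metis matrix_transpose_mul transpose_mat)
  then have "transpose ?Si = ?Si"
    by (metis inv(1) matrix_mul_assoc matrix_mul_lid matrix_mul_rid)
  moreover have "0 < x \<bullet> (?Si *v x)" if "x \<noteq> 0" for x
  proof -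
    define y where "y = ?Si *v x"
    have x: "x = S *v y" using inv(1) by (simp add: y_def matrix_vector_mul_assoc)
    then have "y \<noteq> 0" using that by auto
    then have "0 < y \<bullet> (S *v y)" using pd by (simp add: pd_def)
    also have "y \<bullet> (S *v y) = y \<bullet> x" using x by simp
    also have "\<dots> = x \<bullet> (?Si *v x)" by (simp add: y_def inner_commute)
    finally show ?thesis .
  qed
  ultimately show ?thesis by (simp add: pd_def symm_mat_def)
qed

lemma psd_diag_entry: "psd A \<Longrightarrow> 0 \<le> A $ i $ i"
proof -
  assume "psd A"
  then have "0 \<le> axis i 1 \<bullet> (A *v axis i 1)" by (simp add: psd_def)
  then show ?thesis by (simp add: matrix_vector_mult_basis column_def inner_axis')
qed

lemma pd_diag_entry: "pd A \<Longrightarrow> 0 < A $ i $ i"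
proof -
  assume "pd A"
  then have "0 < axis i 1 \<bullet> (A *v axis i 1)" by (simp add: pd_def)
  then show ?thesis by (simp add: matrix_vector_mult_basis column_def inner_axis')
qed

lemma psd_diag_mat: "(\<And>k. 0 \<le> f k) \<Longrightarrow> psd (diag_mat f)"
  by (simp add: psd_def symm_mat_def inner_diag_mat sum_nonneg)

lemma pd_diag_mat: "(\<And>k. 0 < f k) \<Longrightarrow> pd (diag_mat f)"
  by (rule psd_det_nonzero_imp_pd)
    (auto simp: psd_diag_mat less_imp_le det_diag_mat prod_pos less_imp_neq[symmetric])

lemma psd_entry_bound:
  fixes M :: "real^'n^'n"
  assumes psd: "psd M"
  shows "2 * \<bar>M $ i $ j\<bar> \<le> M $ i $ i + M $ j $ j"
proof -
  have sym: "M $ j $ i = M $ i $ j" using psd_imp_transpose_eq[OF psd] by (metis transpose_def vec_lambda_beta)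
  have quad: "(axis i 1 + s *\<^sub>R axis j 1) \<bullet> (M *v (axis i 1 + s *\<^sub>R axis j 1))
      = M $ i $ i + 2 * s * M $ i $ j + s\<^sup>2 * M $ j $ j" for s :: real
    unfolding quadratic_form_add_scaled[OF psd_imp_transpose_eq[OF psd]]
    by (simp add: matrix_vector_mult_basis column_def inner_axis' sym)
  have "0 \<le> M $ i $ i + 2 * s * M $ i $ j + s\<^sup>2 * M $ j $ j" for s :: real
    using psd unfolding psd_def quad[symmetric] by blast
  from this[of 1] this[of "- 1"] show ?thesis by simp
qed

lemma abs_quadratic_form_le:
  fixes A :: "real^'n^'n"
  shows "\<bar>x \<bullet> (A *v x)\<bar> \<le> (\<Sum>i\<in>UNIV. \<Sum>j\<in>UNIV. \<bar>A $ i $ j\<bar>) * (x \<bullet> x)"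
proof -
  have "\<bar>x \<bullet> (A *v x)\<bar> \<le> norm x * norm (A *v x)" by (rule Cauchy_Schwarz_ineq2)
  also have "norm (A *v x) \<le> onorm ((*v) A) * norm x"
    by (rule onorm) (rule matrix_vector_mul_bounded_linear)
  also have "onorm ((*v) A) \<le> (\<Sum>i\<in>UNIV. \<Sum>j\<in>UNIV. \<bar>A $ i $ j\<bar>)"
    by (rule onorm_le_matrix_component_sum)
  finally show ?thesis
    by (simp add: dot_square_norm power2_eq_square mult_ac mult_left_mono mult_right_mono)
qed

lemma psd_identity_plus_small:
  fixes A :: "real^'n^'n"
  assumes sym: "transpose A = A" and small: "\<bar>c\<bar> * (\<Sum>i\<in>UNIV. \<Sum>j\<in>UNIV. \<bar>A $ i $ j\<bar>) \<le> 1"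
  shows "psd (mat 1 + c *\<^sub>R A)"
proof -
  have "0 \<le> x \<bullet> ((mat 1 + c *\<^sub>R A) *v x)" for x
  proof -
    have "\<bar>c * (x \<bullet> (A *v x))\<bar> \<le> \<bar>c\<bar> * ((\<Sum>i\<in>UNIV. \<Sum>j\<in>UNIV. \<bar>A $ i $ j\<bar>) * (x \<bullet> x))"
      unfolding abs_mult by (intro mult_left_mono abs_quadratic_form_le) auto
    also have "\<dots> \<le> 1 * (x \<bullet> x)"
      unfolding mult.assoc[symmetric] by (intro mult_right_mono small) auto
    finally show ?thesis
      by (simp add: matrix_vector_mult_add_rdistrib scaleR_matrix_vector_assoc[symmetric]
          inner_add_right)
  qed
  moreover have "symm_mat (mat 1 + c *\<^sub>R A)"
    using sym by (simp add: symm_mat_def transpose_def vec_eq_iff mat_def)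
  ultimately show ?thesis by (simp add: psd_def)
qed

lemma psd_identity_minus_imp_symm_mat:
  assumes "psd (mat 1 - X)"
  shows "symm_mat X"
proof -
  have E: "(mat 1 - X) $ j $ i = (mat 1 - X) $ i $ j" for i j
    using psd_imp_transpose_eq[OF assms] by (metis transpose_def vec_lambda_beta)
  have "X $ j $ i = X $ i $ j" for i j
    using E[of i j] by (cases "i = j") (simp_all add: mat_def)
  then show ?thesis by (simp add: symm_mat_def transpose_def vec_eq_iff)
qed

lemma norm_matrix_le_sum_abs: "norm (X :: real^'n^'n) \<le> (\<Sum>i\<in>UNIV. \<Sum>j\<in>UNIV. \<bar>X $ i $ j\<bar>)"
proof -
  have "norm X \<le> (\<Sum>i\<in>UNIV. norm (X $ i))"
    unfolding norm_vec_def by (rule L2_set_le_sum) auto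
  also have "\<dots> \<le> (\<Sum>i\<in>UNIV. \<Sum>j\<in>UNIV. \<bar>X $ i $ j\<bar>)"
    by (rule sum_mono) (rule norm_le_l1_cart)
  finally show ?thesis .
qed

lemma continuous_on_det [continuous_intros]:
  fixes f :: "'a::topological_space \<Rightarrow> real^'n^'n"
  assumes "continuous_on S f"
  shows "continuous_on S (\<lambda>z. det (f z))"
  unfolding det_def by (intro continuous_intros assms)

lemma continuous_on_quadratic_form [continuous_intros]:
  fixes f :: "'a::topological_space \<Rightarrow> real^'n^'n"
  assumes "continuous_on S f"
  shows "continuous_on S (\<lambda>z. x \<bullet> (f z *v x))"
  unfolding inner_vec_def matrix_vector_mult_def by (intro continuous_intros assms)

lemma closed_Collect_psd:
  fixes f :: "'a::topological_space \<Rightarrow> real^'n^'n"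
  assumes "continuous_on UNIV f"
  shows "closed {z. psd (f z)}"
proof -
  have "{z. psd (f z)} = {z. (\<forall>i j. f z $ i $ j = f z $ j $ i) \<and> (\<forall>x. 0 \<le> x \<bullet> (f z *v x))}"
    by (auto simp: psd_def symm_mat_def vec_eq_iff transpose_def)
  also have "closed \<dots>"
    by (intro closed_Collect_conj closed_Collect_all closed_Collect_eq closed_Collect_le
        continuous_intros assms)
  finally show ?thesis .
qed

section \<open>Existence of a dual minimizer\<close>

lemma offdiag_entry [simp]: "offdiag A $ i $ j = (if i = j then 0 else A $ i $ j)"
  by (simp add: offdiag_def)

lemma diff_offdiag: "A - offdiag A = diag_mat (\<lambda>i. A $ i $ i)"
  by (simp add: vec_eq_iff diag_mat_def)

lemma offdiag_diff_eq_diag_mat: "offdiag X - X = diag_mat (\<lambda>i. - X $ i $ i)"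
  by (simp add: vec_eq_iff diag_mat_def)

lemma psd_offdiag_diff_iff: "psd (offdiag X - X) \<longleftrightarrow> (\<forall>i. X $ i $ i \<le> 0)"
proof
  show "psd (offdiag X - X) \<Longrightarrow> \<forall>i. X $ i $ i \<le> 0"
    using psd_diag_entry[of "offdiag X - X"] by auto
qed (auto simp: offdiag_diff_eq_diag_mat intro: psd_diag_mat)

lemma delta_max_eq:
  fixes S :: "real^'n^'n"
  assumes pd: "pd S"
  shows "delta_max S = ln (det (diag_mat (\<lambda>i. matrix_inv S $ i $ i))) + ln (det S)"
proof -
  have "0 < det (diag_mat (\<lambda>i. matrix_inv S $ i $ i))"
    by (intro pd_det_pos pd_diag_mat pd_diag_entry pd_matrix_inv pd)
  then show ?thesis
    using pd_det_pos[OF pd] by (simp add: delta_max_def diff_offdiag det_mul ln_mult)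
qed

lemma C_F_Fdual_neg_exists:
  fixes S :: "real^'n^'n"
  assumes pd: "pd S" and \<delta>: "\<delta> < delta_max S"
  obtains lam X where "(lam, X) \<in> C_F S" "Fdual S \<delta> lam X < 0"
proof -
  let ?Si = "matrix_inv S"
  \<comment> \<open>\<open>\<Sigma>\<^sup>-\<^sup>1 + X/\<lambda>\<close> becomes the diagonal part of \<open>\<Sigma>\<^sup>-\<^sup>1\<close>, as in \<open>\<delta>_max\<close>; \<open>\<lambda>\<close> is small enough for \<open>I - X \<succeq> 0\<close>\<close>
  define c where "c = (\<Sum>i\<in>UNIV. \<Sum>j\<in>UNIV. \<bar>offdiag ?Si $ i $ j\<bar>)"
  define lam where "lam = 1 / (c + 1)"
  define X where "X = (- lam) *\<^sub>R offdiag ?Si"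
  have c: "0 \<le> c" by (simp add: c_def sum_nonneg)
  then have lam: "0 < lam" "lam * c \<le> 1" by (simp_all add: lam_def field_simps)
  have sym: "transpose ?Si = ?Si" by (rule pd_imp_transpose_eq[OF pd_matrix_inv[OF pd]])
  then have symO: "transpose (offdiag ?Si) = offdiag ?Si"
    by (simp add: vec_eq_iff transpose_def)
  then have "symm_mat X"
    by (simp add: X_def symm_mat_def vec_eq_iff transpose_def)
  moreover have "psd (mat 1 - X)"
    unfolding X_def using symO lam by (simp add: psd_identity_plus_small c_def)
  moreover have "psd (offdiag X - X)" unfolding psd_offdiag_diff_iff by (simp add: X_def)
  moreover have P: "?Si + inverse lam *\<^sub>R X = diag_mat (\<lambda>i. ?Si $ i $ i)"
    using lam by (simp add: X_def flip: diff_offdiag)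
  moreover have "pd (diag_mat (\<lambda>i. ?Si $ i $ i))"
    by (intro pd_diag_mat pd_diag_entry pd_matrix_inv pd)
  ultimately have "(lam, X) \<in> C_F S" using lam by (simp add: C_F_def)
  moreover have "Fdual S \<delta> lam X = - lam * (delta_max S - \<delta>)"
    by (simp add: Fdual_def P delta_max_eq[OF pd])
  ultimately show thesis using that lam \<delta> by simp
qed

lemma det_matrix_inv_plus_scalar:
  fixes S :: "real^'n^'n"
  assumes pd: "pd S"
  obtains s :: "'n \<Rightarrow> real" where "\<And>k. 0 < s k"
    "\<And>c. det (matrix_inv S + c *\<^sub>R mat 1) * det S = (\<Prod>k\<in>UNIV. 1 + c * s k)"
proof -
  obtain Q s where Q: "orthogonal_matrix Q" and S: "S = Q ** diag_mat s ** transpose Q"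
    using symmetric_matrix_diagonalizable[OF pd_imp_transpose_eq[OF pd]] by blast
  have pos: "0 < s k" for k
    using pd_congruence_diag_mat_pos[OF orthogonal_matrix_imp_invertible[OF Q]] pd S by blast
  have det: "det (matrix_inv S + c *\<^sub>R mat 1) * det S = (\<Prod>k\<in>UNIV. 1 + c * s k)" for c
  proof -
    have "invertible S" using pd_det_pos[OF pd] by (simp add: invertible_det_nz)
    then have "(matrix_inv S + c *\<^sub>R mat 1) ** S = mat 1 + c *\<^sub>R S"
      by (simp add: matrix_add_rdistrib matrix_inv_mult scalar_matrix_assoc[symmetric])
    also have "\<dots> = 1 *\<^sub>R (Q ** diag_mat (\<lambda>_. 1) ** transpose Q) + c *\<^sub>R (Q ** diag_mat s ** transpose Q)"
      using Q by (simp add: S diag_mat_one orthogonal_matrix_def)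
    also have "\<dots> = Q ** diag_mat (\<lambda>k. 1 * 1 + c * s k) ** transpose Q"
      by (rule congruence_diag_mat_combination)
    finally have "det ((matrix_inv S + c *\<^sub>R mat 1) ** S) = (det Q)\<^sup>2 * (\<Prod>k\<in>UNIV. 1 + c * s k)"
      by (simp add: det_congruence_diag_mat)
    moreover have "(det Q)\<^sup>2 = 1"
      using Q det_orthogonal_matrix[OF Q] by (auto simp: power2_eq_square)
    ultimately show ?thesis by (simp add: det_mul)
  qed
  show thesis by (rule that[OF pos det])
qed

lemma ln_one_plus_le_two_sqrt:
  fixes u :: real
  assumes "0 \<le> u"
  shows "ln (1 + u) \<le> 2 * sqrt u"
proof -
  have "ln (1 + u) = 2 * ln (sqrt (1 + u))" using assms by (simp add: ln_sqrt)
  also have "\<dots> \<le> 2 * (sqrt (1 + u) - 1)" using assms ln_le_minus_one[of "sqrt (1 + u)"] by simp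
  also have "sqrt (1 + u) \<le> 1 + sqrt u" using sqrt_add_le_add_sqrt[of 1 u] assms by simp
  finally show ?thesis by simp
qed

lemma scaled_ln_one_plus_bounds:
  fixes lam s :: real
  assumes lam: "0 < lam" and s: "0 \<le> s"
  shows "lam * ln (1 + s / lam) \<le> s"
    and "lam * ln (1 + s / lam) \<le> 2 * sqrt (lam * s)"
proof -
  have u: "0 \<le> s / lam" using lam s by simp
  have "lam * ln (1 + s / lam) \<le> lam * (s / lam)"
    using ln_add_one_self_le_self[OF u] lam by (intro mult_left_mono) auto
  then show "lam * ln (1 + s / lam) \<le> s" using lam by simp
  have "lam * ln (1 + s / lam) \<le> lam * (2 * sqrt (s / lam))"
    using ln_one_plus_le_two_sqrt[OF u] lam by (intro mult_left_mono) auto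
  also have "lam * (2 * sqrt (s / lam)) = 2 * sqrt (lam * s)"
    using lam by (simp add: real_sqrt_divide real_sqrt_mult field_simps)
  finally show "lam * ln (1 + s / lam) \<le> 2 * sqrt (lam * s)" by simp
qed

lemma Fdual_lower_bound:
  fixes S :: "real^'n^'n" and s :: "'n \<Rightarrow> real"
  assumes pd: "pd S" and C: "(lam, X) \<in> C_F S" and s: "\<And>k. 0 < s k"
    and det: "\<And>c. det (matrix_inv S + c *\<^sub>R mat 1) * det S = (\<Prod>k\<in>UNIV. 1 + c * s k)"
  shows "lam * \<delta> - (\<Sum>k\<in>UNIV. lam * ln (1 + s k / lam)) \<le> Fdual S \<delta> lam X"
proof -
  let ?P = "matrix_inv S + inverse lam *\<^sub>R X"
  let ?R = "matrix_inv S + inverse lam *\<^sub>R mat 1"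
  have lam: "0 < lam" and P: "pd ?P" and X: "psd (mat 1 - X)" using C by (auto simp: C_F_def)
  have "transpose ?R = ?R"
    using pd_imp_transpose_eq[OF pd_matrix_inv[OF pd]]
    by (simp add: vec_eq_iff transpose_def mat_def)
  moreover have "?R - ?P = inverse lam *\<^sub>R (mat 1 - X) + 0 *\<^sub>R (mat 1 - X)" by (simp add: algebra_simps)
  then have "psd (?R - ?P)" using lam by (simp only:) (rule psd_combination[OF X X], auto)
  ultimately have "det ?P \<le> det ?R" by (rule det_mono_psd[OF P])
  then have "ln (det ?P * det S) \<le> ln (det ?R * det S)"
    using pd_det_pos[OF P] pd_det_pos[OF pd] by simp
  also have "det ?R * det S = (\<Prod>k\<in>UNIV. 1 + s k / lam)"
    using det[of "inverse lam"] by (simp add: divide_inverse mult.commute)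
  also have "ln \<dots> = (\<Sum>k\<in>UNIV. ln (1 + s k / lam))"
  proof (rule ln_prod)
    have "0 < 1 + s k / lam" for k using s[of k] lam by (simp add: add_pos_pos)
    then show "1 + s k / lam \<noteq> 0" for k by (metis less_irrefl)
  qed simp
  finally have "ln (det ?P) + ln (det S) \<le> (\<Sum>k\<in>UNIV. ln (1 + s k / lam))"
    using pd_det_pos[OF P] pd_det_pos[OF pd] by (simp add: ln_mult)
  then have "lam * (ln (det ?P) + ln (det S)) \<le> lam * (\<Sum>k\<in>UNIV. ln (1 + s k / lam))"
    using lam by (intro mult_left_mono) auto
  then show ?thesis by (simp add: Fdual_def sum_distrib_left algebra_simps)
qed

lemma Fdual_sublevel_lambda_bounds:
  fixes S :: "real^'n^'n" and s :: "'n \<Rightarrow> real"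
  assumes pd: "pd S" and s: "\<And>k. 0 < s k"
    and det: "\<And>c. det (matrix_inv S + c *\<^sub>R mat 1) * det S = (\<Prod>k\<in>UNIV. 1 + c * s k)"
    and \<delta>: "0 < \<delta>" and m: "m < 0"
    and C: "(lam, X) \<in> C_F S" and F: "Fdual S \<delta> lam X \<le> m"
  shows "lam \<le> (\<Sum>k\<in>UNIV. s k) / \<delta>"
    and "m\<^sup>2 / (4 * (real CARD('n))\<^sup>2 * ((\<Sum>k\<in>UNIV. s k) + 1)) \<le> lam"
proof -
  define T where "T = (\<Sum>k\<in>UNIV. s k)"
  have lam: "0 < lam" using C by (simp add: C_F_def)
  have T: "0 \<le> T" unfolding T_def using s by (simp add: sum_nonneg less_imp_le)
  have F_ge: "lam * \<delta> - (\<Sum>k\<in>UNIV. lam * ln (1 + s k / lam)) \<le> Fdual S \<delta> lam X"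
    by (rule Fdual_lower_bound[OF pd C s det])
  have "(\<Sum>k\<in>UNIV. lam * ln (1 + s k / lam)) \<le> T"
    unfolding T_def using scaled_ln_one_plus_bounds(1)[OF lam] s by (intro sum_mono) (simp add: less_imp_le)
  then have "lam * \<delta> < T" using F_ge F m by linarith
  then show "lam \<le> (\<Sum>k\<in>UNIV. s k) / \<delta>" using \<delta> by (simp add: T_def pos_le_divide_eq)
  have "lam * ln (1 + s k / lam) \<le> 2 * sqrt (lam * T)" for k
  proof -
    have "s k \<le> T" unfolding T_def using s by (intro member_le_sum) (auto simp: less_imp_le)
    then have "sqrt (lam * s k) \<le> sqrt (lam * T)" using lam by simp
    moreover have "lam * ln (1 + s k / lam) \<le> 2 * sqrt (lam * s k)"
      using scaled_ln_one_plus_bounds(2)[OF lam] s[of k] by (simp add: less_imp_le)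
    ultimately show ?thesis by linarith
  qed
  then have "(\<Sum>k\<in>UNIV. lam * ln (1 + s k / lam)) \<le> real CARD('n) * (2 * sqrt (lam * T))"
    using sum_mono[of UNIV "\<lambda>k. lam * ln (1 + s k / lam)" "\<lambda>_. 2 * sqrt (lam * T)"] by simp
  then have "- m \<le> real CARD('n) * (2 * sqrt (lam * T))" using F_ge F mult_pos_pos[OF lam \<delta>] by linarith
  then have "(- m)\<^sup>2 \<le> (real CARD('n) * (2 * sqrt (lam * T)))\<^sup>2" using m by (intro power_mono) auto
  also have "\<dots> = 4 * (real CARD('n))\<^sup>2 * T * lam" using lam T by (simp add: power_mult_distrib)
  also have "\<dots> \<le> 4 * (real CARD('n))\<^sup>2 * (T + 1) * lam" using lam by (intro mult_right_mono) auto
  finally show "m\<^sup>2 / (4 * (real CARD('n))\<^sup>2 * ((\<Sum>k\<in>UNIV. s k) + 1)) \<le> lam"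
    using T by (simp add: T_def[symmetric] divide_le_eq mult.commute)
qed

lemma C_F_entry_bound:
  fixes S :: "real^'n^'n"
  assumes pd: "pd S" and C: "(lam, X) \<in> C_F S" and b: "lam \<le> b"
  shows "\<bar>X $ i $ j\<bar> \<le> 1 + b * (\<Sum>k\<in>UNIV. matrix_inv S $ k $ k)"
proof -
  let ?Si = "matrix_inv S"
  define B where "B = (\<Sum>k\<in>UNIV. ?Si $ k $ k)"
  have lam: "0 < lam" and X1: "psd (mat 1 - X)" and X2: "\<forall>k. X $ k $ k \<le> 0"
    and P: "pd (?Si + inverse lam *\<^sub>R X)"
    using C by (auto simp: C_F_def psd_offdiag_diff_iff)
  have Si: "0 < ?Si $ k $ k" for k by (intro pd_diag_entry pd_matrix_inv pd)
  have diag: "\<bar>X $ k $ k\<bar> \<le> b * B" for k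
  proof -
    have "0 < ?Si $ k $ k + inverse lam * X $ k $ k" using pd_diag_entry[OF P, of k] by simp
    then have "- (lam * ?Si $ k $ k) < X $ k $ k" using lam by (simp add: field_simps)
    moreover have "lam * ?Si $ k $ k \<le> b * B"
      unfolding B_def using Si lam b
      by (intro mult_mono member_le_sum) (auto simp: less_imp_le sum_nonneg)
    ultimately show ?thesis using X2 by auto
  qed
  show ?thesis
  proof (cases "i = j")
    case False
    have "2 * \<bar>(mat 1 - X) $ i $ j\<bar> \<le> (mat 1 - X) $ i $ i + (mat 1 - X) $ j $ j"
      by (rule psd_entry_bound[OF X1])
    then show ?thesis using False diag[of i] diag[of j] by (simp add: B_def mat_def)
  qed (use diag[of j] in \<open>simp add: B_def\<close>)
qed

definition Fdual_box :: "real^'n^'n \<Rightarrow> real \<Rightarrow> real \<Rightarrow> real \<Rightarrow> real \<Rightarrow> (real \<times> (real^'n^'n)) set" where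
  "Fdual_box S a b \<epsilon> B = {(lam, X). a \<le> lam \<and> lam \<le> b \<and> psd (mat 1 - X) \<and> (\<forall>i. X $ i $ i \<le> 0)
      \<and> psd (matrix_inv S + inverse lam *\<^sub>R X) \<and> \<epsilon> \<le> det (matrix_inv S + inverse lam *\<^sub>R X)
      \<and> (\<forall>i j. \<bar>X $ i $ j\<bar> \<le> B)}"

lemma Fdual_box_subset_C_F:
  fixes S :: "real^'n^'n"
  assumes "0 < a" "0 < \<epsilon>"
  shows "Fdual_box S a b \<epsilon> B \<subseteq> C_F S"
proof clarify
  fix lam X assume "(lam, X) \<in> Fdual_box S a b \<epsilon> B"
  then have "a \<le> lam" "psd (mat 1 - X)" "psd (offdiag X - X)"
    and P: "psd (matrix_inv S + inverse lam *\<^sub>R X)" "\<epsilon> \<le> det (matrix_inv S + inverse lam *\<^sub>R X)"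
    by (auto simp: Fdual_box_def psd_offdiag_diff_iff)
  moreover have "pd (matrix_inv S + inverse lam *\<^sub>R X)"
    using P assms(2) by (intro psd_det_nonzero_imp_pd) auto
  ultimately show "(lam, X) \<in> C_F S"
    using assms(1) by (simp add: C_F_def psd_identity_minus_imp_symm_mat)
qed

lemma compact_Fdual_box:
  fixes S :: "real^'n^'n"
  assumes a: "0 < a"
  shows "compact (Fdual_box S a b \<epsilon> B)"
proof -
  \<comment> \<open>\<open>max a\<close> does not change the set but makes the matrix continuous in \<open>lam\<close> everywhere\<close>
  define P where "P z = matrix_inv S + inverse (max a (fst z)) *\<^sub>R snd z" for z :: "real \<times> (real^'n^'n)"
  have contP: "continuous_on UNIV P" unfolding P_def using a by (intro continuous_intros) auto
  have box: "Fdual_box S a b \<epsilon> B = {z. a \<le> fst z \<and> fst z \<le> b \<and> psd (mat 1 - snd z)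
      \<and> (\<forall>i. snd z $ i $ i \<le> 0) \<and> psd (P z) \<and> \<epsilon> \<le> det (P z) \<and> (\<forall>i j. \<bar>snd z $ i $ j\<bar> \<le> B)}"
    by (auto simp: Fdual_box_def P_def max_def)
  have "closed (Fdual_box S a b \<epsilon> B)"
    unfolding box
    by (intro closed_Collect_conj closed_Collect_all closed_Collect_le closed_Collect_psd
        continuous_intros contP)
  moreover have "norm z \<le> b + real CARD('n) * real CARD('n) * B" if "z \<in> Fdual_box S a b \<epsilon> B" for z
  proof -
    have "norm z \<le> norm (fst z) + norm (snd z)" using norm_Pair_le[of "fst z" "snd z"] by simp
    also have "norm (fst z) \<le> b" using that a by (auto simp: Fdual_box_def)
    also have "norm (snd z) \<le> (\<Sum>i\<in>UNIV. \<Sum>j\<in>UNIV. \<bar>snd z $ i $ j\<bar>)" by (rule norm_matrix_le_sum_abs)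
    also have "\<dots> \<le> (\<Sum>i\<in>(UNIV::'n set). \<Sum>j\<in>(UNIV::'n set). B)"
      using that by (intro sum_mono) (auto simp: Fdual_box_def)
    finally show ?thesis by simp
  qed
  then have "bounded (Fdual_box S a b \<epsilon> B)" unfolding bounded_iff by blast
  ultimately show ?thesis by (simp add: compact_eq_bounded_closed)
qed

lemma continuous_on_Fdual_box:
  fixes S :: "real^'n^'n"
  assumes a: "0 < a" and \<epsilon>: "0 < \<epsilon>"
  shows "continuous_on (Fdual_box S a b \<epsilon> B) (\<lambda>z. Fdual S \<delta> (fst z) (snd z))"
proof -
  define P where "P z = matrix_inv S + inverse (max a (fst z)) *\<^sub>R snd z" for z :: "real \<times> (real^'n^'n)"
  have contP: "continuous_on UNIV P" unfolding P_def using a by (intro continuous_intros) auto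
  have "continuous_on (Fdual_box S a b \<epsilon> B) (\<lambda>z. - fst z * (ln (det (P z)) + ln (det S) - \<delta>))"
    using \<epsilon> by (intro continuous_intros continuous_on_subset[OF contP])
      (auto simp: Fdual_box_def P_def max_def)
  then show ?thesis
    by (rule continuous_on_eq) (auto simp: Fdual_box_def Fdual_def P_def max_def)
qed

lemma Fdual_sublevel_subset_box:
  fixes S :: "real^'n^'n" and s :: "'n \<Rightarrow> real"
  assumes pd: "pd S" and s: "\<And>k. 0 < s k"
    and det: "\<And>c. det (matrix_inv S + c *\<^sub>R mat 1) * det S = (\<Prod>k\<in>UNIV. 1 + c * s k)"
    and \<delta>: "0 < \<delta>" and m: "m < 0"
    and C: "(lam, X) \<in> C_F S" and F: "Fdual S \<delta> lam X \<le> m"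
  shows "(lam, X) \<in> Fdual_box S (m\<^sup>2 / (4 * (real CARD('n))\<^sup>2 * ((\<Sum>k\<in>UNIV. s k) + 1)))
           ((\<Sum>k\<in>UNIV. s k) / \<delta>) (exp (\<delta> - ln (det S)))
           (1 + (\<Sum>k\<in>UNIV. s k) / \<delta> * (\<Sum>k\<in>UNIV. matrix_inv S $ k $ k))"
proof -
  let ?P = "matrix_inv S + inverse lam *\<^sub>R X"
  have lam: "0 < lam" and P: "pd ?P" using C by (auto simp: C_F_def)
  have "0 < lam * (ln (det ?P) + ln (det S) - \<delta>)" using F m by (simp add: Fdual_def)
  then have "0 < ln (det ?P) + ln (det S) - \<delta>" using lam by (simp add: zero_less_mult_iff)
  then have "exp (\<delta> - ln (det S)) \<le> exp (ln (det ?P))" by simp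
  also have "\<dots> = det ?P" using pd_det_pos[OF P] by simp
  finally have "exp (\<delta> - ln (det S)) \<le> det ?P" .
  moreover have "psd ?P" by (rule pd_imp_psd[OF P])
  moreover have "\<forall>i. X $ i $ i \<le> 0" "psd (mat 1 - X)" using C by (auto simp: C_F_def psd_offdiag_diff_iff)
  moreover note Fdual_sublevel_lambda_bounds[OF pd s det \<delta> m C F] C_F_entry_bound[OF pd C]
  ultimately show ?thesis unfolding Fdual_box_def by blast
qed

theorem Fdual_has_minimizer:
  fixes S :: "real^'n^'n"
  assumes pd: "pd S" and \<delta>: "0 < \<delta>" "\<delta> < delta_max S"
  obtains lams Xs where "(lams, Xs) \<in> C_F S" "\<And>lam X. (lam, X) \<in> C_F S \<Longrightarrow> Fdual S \<delta> lams Xs \<le> Fdual S \<delta> lam X"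
    "Fdual S \<delta> lams Xs < 0"
proof -
  let ?F = "\<lambda>z. Fdual S \<delta> (fst z) (snd z)"
  obtain lam0 X0 where C0: "(lam0, X0) \<in> C_F S" and m: "Fdual S \<delta> lam0 X0 < 0"
    using C_F_Fdual_neg_exists[OF pd \<delta>(2)] by blast
  obtain s :: "'n \<Rightarrow> real" where s: "\<And>k. 0 < s k"
    and det: "\<And>c. det (matrix_inv S + c *\<^sub>R mat 1) * det S = (\<Prod>k\<in>UNIV. 1 + c * s k)"
    using det_matrix_inv_plus_scalar[OF pd] by blast
  define a where "a = (Fdual S \<delta> lam0 X0)\<^sup>2 / (4 * (real CARD('n))\<^sup>2 * ((\<Sum>k\<in>UNIV. s k) + 1))"
  define K where "K = Fdual_box S a ((\<Sum>k\<in>UNIV. s k) / \<delta>) (exp (\<delta> - ln (det S)))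
           (1 + (\<Sum>k\<in>UNIV. s k) / \<delta> * (\<Sum>k\<in>UNIV. matrix_inv S $ k $ k))"
  have "0 \<le> (\<Sum>k\<in>UNIV. s k)" using s by (intro sum_nonneg) (simp add: less_imp_le)
  then have a: "0 < a" unfolding a_def using m by (intro divide_pos_pos) auto
  have sub: "(lam, X) \<in> K" if "(lam, X) \<in> C_F S" "Fdual S \<delta> lam X \<le> Fdual S \<delta> lam0 X0" for lam X
    unfolding K_def a_def by (rule Fdual_sublevel_subset_box[OF pd s det \<delta>(1) m that])
  have "compact K" unfolding K_def by (rule compact_Fdual_box[OF a])
  moreover have "continuous_on K ?F" unfolding K_def by (rule continuous_on_Fdual_box[OF a]) simp
  moreover have "(lam0, X0) \<in> K" using sub[OF C0] by simp
  ultimately obtain z where z: "z \<in> K" and zmin: "\<And>y. y \<in> K \<Longrightarrow> ?F z \<le> ?F y"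
    using continuous_attains_inf[of K ?F] by blast
  have zC: "(fst z, snd z) \<in> C_F S"
    using z Fdual_box_subset_C_F[OF a, of "exp (\<delta> - ln (det S))"] by (auto simp: K_def)
  have z0: "?F z \<le> Fdual S \<delta> lam0 X0" using zmin[OF \<open>(lam0, X0) \<in> K\<close>] by simp
  show thesis
  proof (rule that[OF zC])
    show "Fdual S \<delta> (fst z) (snd z) \<le> Fdual S \<delta> lam X" if "(lam, X) \<in> C_F S" for lam X
      using zmin[OF sub[OF that]] z0 by (cases "Fdual S \<delta> lam X \<le> Fdual S \<delta> lam0 X0") auto
    show "Fdual S \<delta> (fst z) (snd z) < 0" using z0 m by simp
  qed
qed

section \<open>Uniqueness of the dual minimizer\<close>

lemma perspective_convex_combination:
  fixes P X1 X2 :: "'a::real_vector"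
  assumes l: "0 < l1" "0 < l2" and u: "0 < u" "u < 1"
  defines "L \<equiv> u * l1 + (1 - u) * l2"
  defines "t \<equiv> u * l1 / L"
  shows "P + inverse L *\<^sub>R (u *\<^sub>R X1 + (1 - u) *\<^sub>R X2)
           = t *\<^sub>R (P + inverse l1 *\<^sub>R X1) + (1 - t) *\<^sub>R (P + inverse l2 *\<^sub>R X2)"
    and "0 < t" "t < 1" "L * t = u * l1" "L * (1 - t) = (1 - u) * l2"
proof -
  have L: "0 < L" unfolding L_def using l u by (simp add: add_pos_pos)
  show Lt: "L * t = u * l1" and L1t: "L * (1 - t) = (1 - u) * l2"
    using L by (simp_all add: t_def L_def field_simps)
  show "0 < t" "t < 1" using L l u by (simp_all add: t_def L_def field_simps)
  have c1: "t * inverse l1 = inverse L * u" and c2: "(1 - t) * inverse l2 = inverse L * (1 - u)"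
    using L l Lt L1t by (simp_all add: field_simps)
  have "t *\<^sub>R (P + inverse l1 *\<^sub>R X1) + (1 - t) *\<^sub>R (P + inverse l2 *\<^sub>R X2)
      = P + (t * inverse l1) *\<^sub>R X1 + ((1 - t) * inverse l2) *\<^sub>R X2"
    by (simp add: scaleR_add_right scaleR_left_diff_distrib)
  also have "\<dots> = P + inverse L *\<^sub>R (u *\<^sub>R X1 + (1 - u) *\<^sub>R X2)"
    by (simp only: c1 c2) (simp add: scaleR_add_right)
  finally show "P + inverse L *\<^sub>R (u *\<^sub>R X1 + (1 - u) *\<^sub>R X2)
      = t *\<^sub>R (P + inverse l1 *\<^sub>R X1) + (1 - t) *\<^sub>R (P + inverse l2 *\<^sub>R X2)" ..
qed

lemma offdiag_convex_combination:
  "offdiag (u *\<^sub>R X1 + v *\<^sub>R X2) - (u *\<^sub>R X1 + v *\<^sub>R X2)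
     = u *\<^sub>R (offdiag X1 - X1) + v *\<^sub>R (offdiag X2 - X2)"
  by (simp add: vec_eq_iff algebra_simps)

lemma C_F_convex_combination:
  fixes S :: "real^'n^'n"
  assumes C1: "(l1, X1) \<in> C_F S" and C2: "(l2, X2) \<in> C_F S" and u: "0 < u" "u < 1"
  shows "(u * l1 + (1 - u) * l2, u *\<^sub>R X1 + (1 - u) *\<^sub>R X2) \<in> C_F S"
proof -
  have l: "0 < l1" "0 < l2" and X: "symm_mat X1" "symm_mat X2"
    and I: "psd (mat 1 - X1)" "psd (mat 1 - X2)"
    and D: "psd (offdiag X1 - X1)" "psd (offdiag X2 - X2)"
    and P: "pd (matrix_inv S + inverse l1 *\<^sub>R X1)" "pd (matrix_inv S + inverse l2 *\<^sub>R X2)"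
    using C1 C2 by (auto simp: C_F_def)
  have "mat 1 - (u *\<^sub>R X1 + (1 - u) *\<^sub>R X2) = u *\<^sub>R (mat 1 - X1) + (1 - u) *\<^sub>R (mat 1 - X2)"
    by (simp add: algebra_simps)
  then have "psd (mat 1 - (u *\<^sub>R X1 + (1 - u) *\<^sub>R X2))"
    using psd_combination[OF I, of u "1 - u"] u by simp
  moreover have "psd (offdiag (u *\<^sub>R X1 + (1 - u) *\<^sub>R X2) - (u *\<^sub>R X1 + (1 - u) *\<^sub>R X2))"
    unfolding offdiag_convex_combination using psd_combination[OF D, of u "1 - u"] u by simp
  moreover have "pd (matrix_inv S + inverse (u * l1 + (1 - u) * l2) *\<^sub>R (u *\<^sub>R X1 + (1 - u) *\<^sub>R X2))"
    unfolding perspective_convex_combination(1)[OF l u]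
    by (rule pd_convex_combination[OF P perspective_convex_combination(2,3)[OF l u]])
  ultimately show ?thesis
    using l u X by (simp add: C_F_def symm_mat_combination add_pos_pos)
qed

lemma Fdual_convex_combination_less:
  fixes S :: "real^'n^'n"
  assumes C1: "(l1, X1) \<in> C_F S" and C2: "(l2, X2) \<in> C_F S" and u: "0 < u" "u < 1"
    and ne: "matrix_inv S + inverse l1 *\<^sub>R X1 \<noteq> matrix_inv S + inverse l2 *\<^sub>R X2"
  shows "Fdual S \<delta> (u * l1 + (1 - u) * l2) (u *\<^sub>R X1 + (1 - u) *\<^sub>R X2)
           < u * Fdual S \<delta> l1 X1 + (1 - u) * Fdual S \<delta> l2 X2"
proof -
  define L where "L = u * l1 + (1 - u) * l2"
  define t where "t = u * l1 / L"
  define c where "c = ln (det S) - \<delta>"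
  let ?P1 = "matrix_inv S + inverse l1 *\<^sub>R X1" and ?P2 = "matrix_inv S + inverse l2 *\<^sub>R X2"
  have l: "0 < l1" "0 < l2" and P: "pd ?P1" "pd ?P2" using C1 C2 by (auto simp: C_F_def)
  note persp = perspective_convex_combination[OF l u, folded L_def, folded t_def]
  have F1: "Fdual S \<delta> l1 X1 = - l1 * (ln (det ?P1) + c)"
    and F2: "Fdual S \<delta> l2 X2 = - l2 * (ln (det ?P2) + c)"
    unfolding Fdual_def c_def by simp_all
  have "0 < L" unfolding L_def using l u by (simp add: add_pos_pos)
  have "Fdual S \<delta> (u * l1 + (1 - u) * l2) (u *\<^sub>R X1 + (1 - u) *\<^sub>R X2)
      = - L * (ln (det (t *\<^sub>R ?P1 + (1 - t) *\<^sub>R ?P2)) + c)"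
    unfolding Fdual_def L_def[symmetric] persp(1) c_def by simp
  also have "\<dots> < - L * (t * ln (det ?P1) + (1 - t) * ln (det ?P2) + c)"
    using ln_det_strictly_concave[OF P ne persp(2,3)] \<open>0 < L\<close> by simp
  also have "\<dots> = - (L * t) * (ln (det ?P1) + c) - (L * (1 - t)) * (ln (det ?P2) + c)"
    by (simp add: algebra_simps)
  also have "\<dots> = u * Fdual S \<delta> l1 X1 + (1 - u) * Fdual S \<delta> l2 X2"
    unfolding F1 F2 persp(4,5) by (simp add: algebra_simps)
  finally show ?thesis .
qed

theorem Fdual_minimizer_unique:
  fixes S :: "real^'n^'n"
  assumes C1: "(l1, X1) \<in> C_F S" and C2: "(l2, X2) \<in> C_F S"
    and min1: "\<And>lam X. (lam, X) \<in> C_F S \<Longrightarrow> Fdual S \<delta> l1 X1 \<le> Fdual S \<delta> lam X"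
    and min2: "\<And>lam X. (lam, X) \<in> C_F S \<Longrightarrow> Fdual S \<delta> l2 X2 \<le> Fdual S \<delta> lam X"
    and neg: "Fdual S \<delta> l1 X1 < 0"
  shows "l1 = l2 \<and> X1 = X2"
proof -
  let ?P1 = "matrix_inv S + inverse l1 *\<^sub>R X1" and ?P2 = "matrix_inv S + inverse l2 *\<^sub>R X2"
  have l1: "0 < l1" using C1 by (simp add: C_F_def)
  have eq: "Fdual S \<delta> l1 X1 = Fdual S \<delta> l2 X2" using min1[OF C2] min2[OF C1] by simp
  have P: "?P1 = ?P2"
  proof (rule ccontr)
    assume "?P1 \<noteq> ?P2"
    from Fdual_convex_combination_less[OF C1 C2 _ _ this, of "1/2" \<delta>]
    have "Fdual S \<delta> (l1 / 2 + l2 / 2) ((1/2) *\<^sub>R X1 + (1/2) *\<^sub>R X2) < Fdual S \<delta> l1 X1"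
      using eq by simp
    moreover have "(l1 / 2 + l2 / 2, (1/2) *\<^sub>R X1 + (1/2) *\<^sub>R X2) \<in> C_F S"
      using C_F_convex_combination[OF C1 C2, of "1/2"] by simp
    ultimately show False using min1 by fastforce
  qed
  have "ln (det ?P1) + ln (det S) - \<delta> \<noteq> 0" using neg by (auto simp: Fdual_def)
  moreover have "l1 * (ln (det ?P1) + ln (det S) - \<delta>) = l2 * (ln (det ?P1) + ln (det S) - \<delta>)"
    using eq by (simp add: Fdual_def P)
  ultimately have "l1 = l2" by simp
  moreover from this have "X1 = X2" using P l1 by simp
  ultimately show ?thesis ..
qed

section \<open>The problem over \<open>C_0\<close>\<close>

lemma C_0_imp_C_F:
  assumes "(lam, \<Gamma>, \<Theta>) \<in> C_0 S"
  shows "(lam, offdiag \<Theta> - \<Gamma>) \<in> C_F S"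
proof -
  have lam: "lam > 0" and sym: "symm_mat \<Gamma>" "symm_mat \<Theta>" and I: "psd (mat 1 + \<Gamma> - offdiag \<Theta>)"
    and \<Gamma>: "psd \<Gamma>" and P: "pd (matrix_inv S + inverse lam *\<^sub>R (offdiag \<Theta> - \<Gamma>))"
    using assms by (auto simp: C_0_def)
  have "symm_mat (offdiag \<Theta> - \<Gamma>)" using sym by (simp add: symm_mat_def vec_eq_iff transpose_def)
  moreover have "psd (mat 1 - (offdiag \<Theta> - \<Gamma>))"
    using I by (simp add: diff_diff_eq2 add_diff_eq)
  moreover have "psd (offdiag (offdiag \<Theta> - \<Gamma>) - (offdiag \<Theta> - \<Gamma>))"
    unfolding psd_offdiag_diff_iff using psd_diag_entry[OF \<Gamma>] by simp
  ultimately show ?thesis using lam P by (simp add: C_F_def)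
qed

lemma C_F_imp_C_0:
  assumes "(lam, X) \<in> C_F S"
  shows "(lam, offdiag X - X, X) \<in> C_0 S"
proof -
  have "lam > 0" "symm_mat X" "psd (mat 1 - X)" "psd (offdiag X - X)"
    "pd (matrix_inv S + inverse lam *\<^sub>R X)"
    using assms by (auto simp: C_F_def)
  moreover have "mat 1 + (offdiag X - X) - offdiag X = mat 1 - X" by simp
  ultimately show ?thesis
    by (auto simp: C_0_def symm_mat_def vec_eq_iff transpose_def)
qed

lemma Jtilde_eq_Fdual: "Jtilde S \<delta> lam \<Gamma> \<Theta> = Fdual S \<delta> lam (offdiag \<Theta> - \<Gamma>)"
  by (simp add: Jtilde_def Fdual_def algebra_simps)

lemma Jtilde_minimizer_imp_Fdual_minimizer:
  assumes C0: "(lam, \<Gamma>, \<Theta>) \<in> C_0 S"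
    and min: "\<forall>(lam', \<Gamma>', \<Theta>') \<in> C_0 S. Jtilde S \<delta> lam \<Gamma> \<Theta> \<le> Jtilde S \<delta> lam' \<Gamma>' \<Theta>'"
    and C: "(lam', X') \<in> C_F S"
  shows "Fdual S \<delta> lam (offdiag \<Theta> - \<Gamma>) \<le> Fdual S \<delta> lam' X'"
proof -
  have "Jtilde S \<delta> lam \<Gamma> \<Theta> \<le> Jtilde S \<delta> lam' (offdiag X' - X') X'"
    using min C_F_imp_C_0[OF C] by fast
  then show ?thesis by (simp add: Jtilde_eq_Fdual)
qed

theorem theorem2:
  fixes S :: "real^'n^'n" and \<delta> :: real
  assumes "symm_mat S" and "pd S"
    and "0 < \<delta>" and "\<delta> < delta_max S"
  shows "\<exists>lams Xs. (lams, Xs) \<in> C_F S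
           \<and> (\<forall>(lam, X) \<in> C_F S. Fdual S \<delta> lams Xs \<le> Fdual S \<delta> lam X)
           \<and> (\<forall>(lam, X) \<in> C_F S. (\<forall>(lam', X') \<in> C_F S. Fdual S \<delta> lam X \<le> Fdual S \<delta> lam' X')
                 \<longrightarrow> lam = lams \<and> X = Xs)
           \<and> (\<forall>(lam, \<Gamma>, \<Theta>) \<in> C_0 S.
                 (\<forall>(lam', \<Gamma>', \<Theta>') \<in> C_0 S. Jtilde S \<delta> lam \<Gamma> \<Theta> \<le> Jtilde S \<delta> lam' \<Gamma>' \<Theta>')
                 \<longrightarrow> lam = lams \<and> offdiag \<Theta> - \<Gamma> = Xs)"
proof -
  obtain lams Xs where C: "(lams, Xs) \<in> C_F S"
    and min: "\<And>lam X. (lam, X) \<in> C_F S \<Longrightarrow> Fdual S \<delta> lams Xs \<le> Fdual S \<delta> lam X"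
    and neg: "Fdual S \<delta> lams Xs < 0"
    using Fdual_has_minimizer[OF assms(2-4)] by blast
  have unique: "lam = lams \<and> X = Xs"
    if "(lam, X) \<in> C_F S" "\<And>lam' X'. (lam', X') \<in> C_F S \<Longrightarrow> Fdual S \<delta> lam X \<le> Fdual S \<delta> lam' X'"
    for lam X
    using Fdual_minimizer_unique[OF C that(1) min that(2) neg] by auto
  show ?thesis
  proof (intro exI conjI)
    show "\<forall>(lam, X) \<in> C_F S. Fdual S \<delta> lams Xs \<le> Fdual S \<delta> lam X" using min by fast
    show "\<forall>(lam, X) \<in> C_F S. (\<forall>(lam', X') \<in> C_F S. Fdual S \<delta> lam X \<le> Fdual S \<delta> lam' X')
        \<longrightarrow> lam = lams \<and> X = Xs"
      by (auto intro!: unique)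
    show "\<forall>(lam, \<Gamma>, \<Theta>) \<in> C_0 S.
        (\<forall>(lam', \<Gamma>', \<Theta>') \<in> C_0 S. Jtilde S \<delta> lam \<Gamma> \<Theta> \<le> Jtilde S \<delta> lam' \<Gamma>' \<Theta>')
        \<longrightarrow> lam = lams \<and> offdiag \<Theta> - \<Gamma> = Xs"
    proof clarify
      fix lam \<Gamma> \<Theta> assume C0: "(lam, \<Gamma>, \<Theta>) \<in> C_0 S"
        and minJ: "\<forall>(lam', \<Gamma>', \<Theta>') \<in> C_0 S. Jtilde S \<delta> lam \<Gamma> \<Theta> \<le> Jtilde S \<delta> lam' \<Gamma>' \<Theta>'"
      show "lam = lams \<and> offdiag \<Theta> - \<Gamma> = Xs"
        by (rule unique[OF C_0_imp_C_F[OF C0] Jtilde_minimizer_imp_Fdual_minimizer[OF C0 minJ]])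
    qed
  qed (rule C)
qed

end
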